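(* The regular module $\mathbb{M}_2$ is injective as a bigraded $\mathbb{M}_2$-module (in the category of bigraded $\mathbb{M}_2$-modules and bidegree-preserving homomorphisms).
   Context: $\mathbb{M}_2$ is the bigraded commutative $\mathbb{F}_2$-algebra with $\mathbb{F}_2$-basis the elements $\rho^m\tau^n$ ($m,n\ge0$) in bidegree $(m,m+n)$ and $\frac{\theta}{\rho^m\tau^n}$ ($m,n\ge 0$) in bidegree $(-m,-2-m-n)$; multiplication: $\rho^a\tau^b\cdot\rho^c\tau^d=\rho^{a+c}\tau^{b+d}$, $\rho^a\tau^b\cdot\frac{\theta}{\rho^c\tau^d}=\frac{\theta}{\rho^{c-a}\tau^{d-b}}$ if $a\le c,b\le d$ and $0$ otherwise, and the product of two elements of the form $\frac{\theta}{\rho^c\tau^d}$ is $0$. (It is $H^{*,*}(pt;\underline{\mathbb{F}_2})$.) *)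

theory Defs
  imports Main
begin

text \<open>F_2-basis of M_2: RT m n stands for rho^m tau^n, Th m n stands for theta/(rho^m tau^n).\<close>
datatype m2b = RT nat nat | Th nat nat

fun m2deg :: "m2b \<Rightarrow> int \<times> int" where
  "m2deg (RT m n) = (int m, int m + int n)"
| "m2deg (Th m n) = (- int m, -2 - int m - int n)"

text \<open>Product of basis elements (None means the product is 0).\<close>
fun m2mult :: "m2b \<Rightarrow> m2b \<Rightarrow> m2b option" where
  "m2mult (RT a b) (RT c d) = Some (RT (a + c) (b + d))"
| "m2mult (RT a b) (Th c d) = (if a \<le> c \<and> b \<le> d then Some (Th (c - a) (d - b)) else None)"
| "m2mult (Th c d) (RT a b) = (if a \<le> c \<and> b \<le> d then Some (Th (c - a) (d - b)) else None)"
| "m2mult (Th _ _) (Th _ _) = None"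

text \<open>Elements of M_2 are F_2-linear combinations of basis elements, i.e. finite sets of
  basis elements; addition is symmetric difference and multiplication is the bilinear
  extension of m2mult (coefficients mod 2).\<close>
definition m2plus :: "m2b set \<Rightarrow> m2b set \<Rightarrow> m2b set" where
  "m2plus x y = (x - y) \<union> (y - x)"

definition m2times :: "m2b set \<Rightarrow> m2b set \<Rightarrow> m2b set" where
  "m2times x y = {c. odd (card {(s, t). s \<in> x \<and> t \<in> y \<and> m2mult s t = Some c})}"

definition dshift :: "int \<times> int \<Rightarrow> int \<times> int \<Rightarrow> int \<times> int" where
  "dshift d e = (fst d + fst e, snd d + snd e)"

text \<open>A bigraded M_2-module M = \<oplus>_{d} M_d is given by the family of its homogeneous
  components: bcar M d is the F_2-vector space M_d (with addition badd M d and zero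
  bzero M d), and bact M b d : M_d \<rightarrow> M_{d + |b|} is the action of the basis element b.\<close>
record 'a bgmod =
  bcar  :: "int \<times> int \<Rightarrow> 'a set"
  badd  :: "int \<times> int \<Rightarrow> 'a \<Rightarrow> 'a \<Rightarrow> 'a"
  bzero :: "int \<times> int \<Rightarrow> 'a"
  bact  :: "m2b \<Rightarrow> int \<times> int \<Rightarrow> 'a \<Rightarrow> 'a"

definition bigraded_M2_module :: "'a bgmod \<Rightarrow> bool" where
  "bigraded_M2_module M \<longleftrightarrow>
     (\<forall>d. bzero M d \<in> bcar M d
        \<and> (\<forall>x\<in>bcar M d. \<forall>y\<in>bcar M d. badd M d x y \<in> bcar M d)
        \<and> (\<forall>x\<in>bcar M d. \<forall>y\<in>bcar M d. \<forall>z\<in>bcar M d.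
              badd M d (badd M d x y) z = badd M d x (badd M d y z))
        \<and> (\<forall>x\<in>bcar M d. \<forall>y\<in>bcar M d. badd M d x y = badd M d y x)
        \<and> (\<forall>x\<in>bcar M d. badd M d (bzero M d) x = x)
        \<and> (\<forall>x\<in>bcar M d. badd M d x x = bzero M d)
        \<and> (\<forall>b. \<forall>x\<in>bcar M d. bact M b d x \<in> bcar M (dshift d (m2deg b)))
        \<and> (\<forall>b. \<forall>x\<in>bcar M d. \<forall>y\<in>bcar M d.
              bact M b d (badd M d x y)
              = badd M (dshift d (m2deg b)) (bact M b d x) (bact M b d y))
        \<and> (\<forall>x\<in>bcar M d. bact M (RT 0 0) d x = x)
        \<and> (\<forall>b c. \<forall>x\<in>bcar M d.
              bact M b (dshift d (m2deg c)) (bact M c d x)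
              = (case m2mult b c of
                   None \<Rightarrow> bzero M (dshift (dshift d (m2deg c)) (m2deg b))
                 | Some e \<Rightarrow> bact M e d x)))"

definition bg_hom :: "'a bgmod \<Rightarrow> 'b bgmod \<Rightarrow> (int \<times> int \<Rightarrow> 'a \<Rightarrow> 'b) \<Rightarrow> bool" where
  "bg_hom M N f \<longleftrightarrow>
     (\<forall>d. (\<forall>x\<in>bcar M d. f d x \<in> bcar N d)
        \<and> (\<forall>x\<in>bcar M d. \<forall>y\<in>bcar M d. f d (badd M d x y) = badd N d (f d x) (f d y))
        \<and> (\<forall>b. \<forall>x\<in>bcar M d. f (dshift d (m2deg b)) (bact M b d x) = bact N b d (f d x)))"

definition bg_mono :: "'a bgmod \<Rightarrow> 'b bgmod \<Rightarrow> (int \<times> int \<Rightarrow> 'a \<Rightarrow> 'b) \<Rightarrow> bool" where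
  "bg_mono M N f \<longleftrightarrow> bg_hom M N f \<and> (\<forall>d. inj_on (f d) (bcar M d))"

definition M2reg :: "m2b set bgmod" where
  "M2reg = \<lparr> bcar = (\<lambda>d. {x. x \<subseteq> {b. m2deg b = d}}),
             badd = (\<lambda>d. m2plus),
             bzero = (\<lambda>d. {}),
             bact = (\<lambda>b d x. m2times {b} x) \<rparr>"

definition bg_injective :: "'c bgmod \<Rightarrow> 'a itself \<Rightarrow> 'b itself \<Rightarrow> bool" where
  "bg_injective Q (TYPE('a)) (TYPE('b)) \<longleftrightarrow>
     (\<forall>(A :: 'a bgmod) (B :: 'b bgmod) i f.
        bigraded_M2_module A \<longrightarrow> bigraded_M2_module B \<longrightarrow>
        bg_mono A B i \<longrightarrow> bg_hom A Q f \<longrightarrow>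
        (\<exists>g. bg_hom B Q g \<and> (\<forall>d. \<forall>x\<in>bcar A d. g d (i d x) = f d x)))"

end

theory Submission
  imports Defs
begin

text \<open>
  The element \<theta> = Th 0 0 spans M_2 in bidegree (0,-2), and every basis element b has a
  unique partner dual b with (dual b) b = \<theta>; more generally (dual e) c = dual t iff c t = e.
  Consequently a homomorphism from a bigraded M_2-module B into M_2 is the same thing as an
  F_2-linear functional \<Lambda> on the single component B_(0,-2): the homomorphism sends y to
  the sum of the basis elements b with \<Lambda>((dual b) y), and conversely one reads off \<Lambda> as
  the \<theta>-coefficient in bidegree (0,-2). Injectivity of M_2 therefore reduces to extending
  an F_2-linear functional along an injective linear map, which Zorn's lemma provides.
\<close>

text \<open>Booleans model F_2, with \<open>\<noteq>\<close> as addition.\<close>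
definition linear_functional_on :: "'a set \<Rightarrow> ('a \<Rightarrow> 'a \<Rightarrow> 'a) \<Rightarrow> ('a \<Rightarrow> bool) \<Rightarrow> bool" where
  "linear_functional_on V add \<Lambda> \<longleftrightarrow> (\<forall>x\<in>V. \<forall>y\<in>V. \<Lambda> (add x y) = (\<Lambda> x \<noteq> \<Lambda> y))"

locale f2_space =
  fixes V :: "'a set" and add :: "'a \<Rightarrow> 'a \<Rightarrow> 'a" and zero :: 'a
  assumes zero_closed: "zero \<in> V"
    and add_closed: "x \<in> V \<Longrightarrow> y \<in> V \<Longrightarrow> add x y \<in> V"
    and add_assoc: "x \<in> V \<Longrightarrow> y \<in> V \<Longrightarrow> z \<in> V \<Longrightarrow> add (add x y) z = add x (add y z)"
    and add_commute: "x \<in> V \<Longrightarrow> y \<in> V \<Longrightarrow> add x y = add y x"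
    and add_zero_left: "x \<in> V \<Longrightarrow> add zero x = x"
    and add_self: "x \<in> V \<Longrightarrow> add x x = zero"
begin

lemma add_zero_right: "x \<in> V \<Longrightarrow> add x zero = x"
  using add_commute add_zero_left zero_closed by metis

lemma add_add_self_left: "x \<in> V \<Longrightarrow> y \<in> V \<Longrightarrow> add x (add x y) = y"
  by (metis add_assoc add_self add_zero_left)

lemma add_left_commute: "x \<in> V \<Longrightarrow> y \<in> V \<Longrightarrow> z \<in> V \<Longrightarrow> add x (add y z) = add y (add x z)"
  by (metis add_assoc add_commute)

lemma add_left_cancel: "x \<in> V \<Longrightarrow> y \<in> V \<Longrightarrow> z \<in> V \<Longrightarrow> add x y = add x z \<Longrightarrow> y = z"
  by (metis add_add_self_left)

lemma linear_functional_zero: "linear_functional_on V add \<Lambda> \<Longrightarrow> \<not> \<Lambda> zero"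
  unfolding linear_functional_on_def using add_self zero_closed by fastforce

text \<open>Graphs of linear functionals on subspaces; working with graphs makes the union of a
  chain trivially an upper bound in Zorn's lemma.\<close>
definition linear_graph :: "('a \<times> bool) set \<Rightarrow> bool" where
  "linear_graph G \<longleftrightarrow> G \<subseteq> V \<times> UNIV \<and> single_valued G
     \<and> (\<forall>x p y q. (x, p) \<in> G \<longrightarrow> (y, q) \<in> G \<longrightarrow> (add x y, p \<noteq> q) \<in> G)"

lemma linear_graphD:
  assumes "linear_graph G"
  shows linear_graph_closed: "(x, p) \<in> G \<Longrightarrow> x \<in> V"
    and linear_graph_unique: "(x, p) \<in> G \<Longrightarrow> (x, q) \<in> G \<Longrightarrow> p = q"
    and linear_graph_add: "(x, p) \<in> G \<Longrightarrow> (y, q) \<in> G \<Longrightarrow> (add x y, p \<noteq> q) \<in> G"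
  using assms unfolding linear_graph_def single_valued_def by blast+

lemma linear_graph_zero: "linear_graph G \<Longrightarrow> (x, p) \<in> G \<Longrightarrow> (zero, False) \<in> G"
  using linear_graph_add[of G x p x p] linear_graph_closed add_self by force

lemma linear_graph_Union_chain:
  assumes "subset.chain {G. linear_graph G} C"
  shows "linear_graph (\<Union>C)"
proof -
  have lin: "\<And>G. G \<in> C \<Longrightarrow> linear_graph G"
    and chain: "\<And>G H. G \<in> C \<Longrightarrow> H \<in> C \<Longrightarrow> G \<subseteq> H \<or> H \<subseteq> G"
    using assms unfolding subset.chain_def by blast+
  have common: "\<exists>G\<in>C. a \<in> G \<and> b \<in> G" if "a \<in> \<Union>C" "b \<in> \<Union>C" for a b
    using that chain by blast
  show ?thesis
    unfolding linear_graph_def single_valued_def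
  proof (intro conjI allI impI subsetI)
    show "a \<in> V \<times> UNIV" if "a \<in> \<Union>C" for a
      using that lin linear_graph_closed by (cases a) blast
    show "p = q" if "(x, p) \<in> \<Union>C" "(x, q) \<in> \<Union>C" for x p q
      using common[OF that] lin linear_graph_unique by blast
    show "(add x y, p \<noteq> q) \<in> \<Union>C" if "(x, p) \<in> \<Union>C" "(y, q) \<in> \<Union>C" for x p y q
      using common[OF that] lin linear_graph_add by blast
  qed
qed

lemma linear_graph_extend:
  assumes G: "linear_graph G" and v: "v \<in> V" "v \<notin> Domain G"
  shows "linear_graph (G \<union> {(add v x, p) | x p. (x, p) \<in> G})"
proof -
  define G' where "G' = G \<union> {(add v x, p) | x p. (x, p) \<in> G}"
  have GV: "\<And>x p. (x, p) \<in> G \<Longrightarrow> x \<in> V" using linear_graph_closed[OF G] .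
  have no_mix: False if "(x, p) \<in> G" "(y, q) \<in> G" "x = add v y" for x p y q
  proof -
    have "add x y = v"
      using that GV v add_assoc add_self add_zero_right by metis
    then show False using linear_graph_add[OF G that(1,2)] v(2) by (metis Domain.DomainI)
  qed
  have "single_valued G'"
  proof (rule single_valuedI)
    show "p = q" if "(x, p) \<in> G'" "(x, q) \<in> G'" for x p q
      using that no_mix linear_graph_unique[OF G] add_left_cancel[OF v(1)] GV
      unfolding G'_def by blast
  qed
  moreover have "(add x y, p \<noteq> q) \<in> G'" if xy: "(x, p) \<in> G'" "(y, q) \<in> G'" for x p y q
  proof -
    obtain x' y' where x': "(x', p) \<in> G" "x = x' \<or> x = add v x'"
      and y': "(y', q) \<in> G" "y = y' \<or> y = add v y'"
      using xy unfolding G'_def by blast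
    have "add x y = add x' y' \<or> add x y = add v (add x' y')"
    proof -
      have "x' \<in> V" "y' \<in> V" using x' y' GV by blast+
      then show ?thesis
        using x'(2) y'(2) v(1) add_assoc add_left_commute add_add_self_left add_closed by metis
    qed
    moreover have "(add x' y', p \<noteq> q) \<in> G" using linear_graph_add[OF G x'(1) y'(1)] .
    ultimately show ?thesis
      unfolding G'_def by (elim disjE) (simp_all, blast)
  qed
  moreover have "G' \<subseteq> V \<times> UNIV"
    unfolding G'_def using GV v(1) by (auto intro: add_closed)
  ultimately have "linear_graph G'"
    unfolding linear_graph_def by blast
  then show ?thesis unfolding G'_def .
qed

lemma exists_total_linear_graph:
  assumes H: "linear_graph H" "H \<noteq> {}"
  shows "\<exists>G. H \<subseteq> G \<and> linear_graph G \<and> Domain G = V"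
proof -
  let ?A = "{G. linear_graph G \<and> H \<subseteq> G}"
  have "\<exists>M\<in>?A. \<forall>G\<in>?A. M \<subseteq> G \<longrightarrow> G = M"
  proof (rule subset_Zorn_nonempty)
    show "?A \<noteq> {}" using H by blast
    show "\<Union>C \<in> ?A" if C: "C \<noteq> {}" "subset.chain ?A C" for C
    proof -
      have "subset.chain {G. linear_graph G} C"
        using C(2) by (auto simp: subset.chain_def)
      then have "linear_graph (\<Union>C)" by (rule linear_graph_Union_chain)
      moreover obtain G where "G \<in> C" using C(1) by blast
      with C(2) have "H \<subseteq> \<Union>C" unfolding subset.chain_def by blast
      ultimately show ?thesis by simp
    qed
  qed
  then obtain M where "M \<in> ?A" and max: "\<forall>G\<in>?A. M \<subseteq> G \<longrightarrow> G = M" ..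
  then have M: "linear_graph M" "H \<subseteq> M" by simp_all
  have "v \<in> Domain M" if v: "v \<in> V" for v
  proof (rule ccontr)
    assume v_new: "v \<notin> Domain M"
    let ?M' = "M \<union> {(add v x, p) | x p. (x, p) \<in> M}"
    have "?M' \<in> ?A" using linear_graph_extend[OF M(1) v v_new] M(2) by blast
    then have M'_eq: "?M' = M" by (rule max[rule_format]) blast
    obtain x p where "(x, p) \<in> H" using H(2) by auto
    with M have "(zero, False) \<in> M" by (blast intro: linear_graph_zero)
    then have "(add v zero, False) \<in> ?M'" by blast
    then have "(v, False) \<in> M" unfolding M'_eq add_zero_right[OF v] .
    with v_new show False by blast
  qed
  then have "Domain M = V" using linear_graph_closed[OF M(1)] by auto
  with M show ?thesis by blast
qed

lemma linear_functional_extension: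
  assumes W: "f2_space W addW zeroW"
    and j_closed: "\<And>a. a \<in> W \<Longrightarrow> j a \<in> V"
    and j_add: "\<And>a b. a \<in> W \<Longrightarrow> b \<in> W \<Longrightarrow> j (addW a b) = add (j a) (j b)"
    and j_inj: "inj_on j W"
    and \<mu>: "linear_functional_on W addW \<mu>"
  shows "\<exists>\<Lambda>. linear_functional_on V add \<Lambda> \<and> (\<forall>a\<in>W. \<Lambda> (j a) = \<mu> a)"
proof -
  define H where "H = (\<lambda>a. (j a, \<mu> a)) ` W"
  have "linear_graph H"
    unfolding linear_graph_def single_valued_def H_def
  proof (intro conjI allI impI)
    show "(\<lambda>a. (j a, \<mu> a)) ` W \<subseteq> V \<times> UNIV" using j_closed by blast
    show "p = q" if "(x, p) \<in> (\<lambda>a. (j a, \<mu> a)) ` W" "(x, q) \<in> (\<lambda>a. (j a, \<mu> a)) ` W" for x p q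
      using that j_inj by (auto dest: inj_onD)
    show "(add x y, p \<noteq> q) \<in> (\<lambda>a. (j a, \<mu> a)) ` W"
      if xy: "(x, p) \<in> (\<lambda>a. (j a, \<mu> a)) ` W" "(y, q) \<in> (\<lambda>a. (j a, \<mu> a)) ` W" for x p y q
    proof -
      obtain a b where "a \<in> W" "b \<in> W" "x = j a" "p = \<mu> a" "y = j b" "q = \<mu> b"
        using xy by blast
      moreover have "addW a b \<in> W" using calculation f2_space.add_closed[OF W] by blast
      ultimately show ?thesis
        using j_add \<mu> unfolding linear_functional_on_def by (auto intro!: rev_image_eqI[of "addW a b"])
    qed
  qed
  moreover have "H \<noteq> {}" using f2_space.zero_closed[OF W] unfolding H_def by blast
  ultimately obtain G where G: "H \<subseteq> G" "linear_graph G" "Domain G = V"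
    using exists_total_linear_graph by blast
  define \<Lambda> where "\<Lambda> x \<longleftrightarrow> (x, True) \<in> G" for x
  have graph_value: "\<Lambda> x = p" if "(x, p) \<in> G" for x p
    using that linear_graph_unique[OF G(2), of x p True] unfolding \<Lambda>_def by (cases p) auto
  have "linear_functional_on V add \<Lambda>"
    unfolding linear_functional_on_def
  proof (intro ballI)
    fix x y assume "x \<in> V" "y \<in> V"
    then obtain p q where xy: "(x, p) \<in> G" "(y, q) \<in> G" using G(3) by blast
    then have "(add x y, p \<noteq> q) \<in> G" by (rule linear_graph_add[OF G(2)])
    then show "\<Lambda> (add x y) = (\<Lambda> x \<noteq> \<Lambda> y)"
      using xy graph_value by simp
  qed
  moreover have "\<forall>a\<in>W. \<Lambda> (j a) = \<mu> a" using G(1) graph_value unfolding H_def by blast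
  ultimately show ?thesis by blast
qed

end

fun dual :: "m2b \<Rightarrow> m2b" where
  "dual (RT m n) = Th m n"
| "dual (Th m n) = RT m n"

lemma dual_dual [simp]: "dual (dual b) = b"
  by (cases b) auto

lemma m2deg_m2mult: "m2mult s t = Some e \<Longrightarrow> m2deg e = dshift (m2deg s) (m2deg t)"
  by (cases s; cases t) (auto simp: dshift_def split: if_splits)

lemma dshift_m2deg_dual: "dshift (m2deg b) (m2deg (dual b)) = (0, -2)"
  by (cases b) (auto simp: dshift_def)

lemma m2mult_RT00: "m2mult (RT 0 0) t = Some t"
  by (cases t) auto

lemma m2mult_inj: "m2mult c t = Some e \<Longrightarrow> m2mult c t' = Some e \<Longrightarrow> t = t'"
  by (cases c; cases t; cases t') (auto split: if_splits)

lemma m2mult_assoc: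
  "(\<exists>t. m2mult c s = Some t \<and> m2mult b t = Some e) \<longleftrightarrow>
   (\<exists>u. m2mult b c = Some u \<and> m2mult u s = Some e)"
  by (cases b; cases c; cases s) (auto split: if_splits)

lemma m2mult_dual_eq_Some_iff: "m2mult (dual e) c = Some u \<longleftrightarrow> m2mult c (dual u) = Some e"
  by (cases e; cases c; cases u) (auto split: if_splits)

lemma m2deg_m2mult_right:
  "m2mult c t = Some e \<Longrightarrow> m2deg e = dshift d (m2deg c) \<Longrightarrow> m2deg t = d"
  by (drule m2deg_m2mult) (auto simp: dshift_def prod_eq_iff)

lemma m2mult_dual_eq_theta_iff: "m2mult (dual b) t = Some (Th 0 0) \<longleftrightarrow> t = b"
  by (cases b; cases t) (auto split: if_splits)

lemma m2times_singleton: "m2times {c} X = {e. \<exists>t\<in>X. m2mult c t = Some e}"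
proof -
  have "odd (card {(s, t). s \<in> {c} \<and> t \<in> X \<and> m2mult s t = Some e}) \<longleftrightarrow>
    (\<exists>t\<in>X. m2mult c t = Some e)" for e
  proof (cases "\<exists>t\<in>X. m2mult c t = Some e")
    case True
    then obtain t where "t \<in> X" "m2mult c t = Some e" by blast
    then have "{(s, t). s \<in> {c} \<and> t \<in> X \<and> m2mult s t = Some e} = {(c, t)}"
      using m2mult_inj by auto
    then show ?thesis using True by simp
  next
    case False
    then have "{(s, t). s \<in> {c} \<and> t \<in> X \<and> m2mult s t = Some e} = {}" by auto
    then show ?thesis using False by (simp only: card.empty) simp
  qed
  then show ?thesis unfolding m2times_def by blast
qed

lemma m2times_singleton_m2plus:
  "m2times {c} (m2plus X Y) = m2plus (m2times {c} X) (m2times {c} Y)"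
  unfolding m2times_singleton m2plus_def by (auto dest: m2mult_inj)

lemma m2times_singleton_assoc:
  "m2times {b} (m2times {c} X) = (case m2mult b c of None \<Rightarrow> {} | Some u \<Rightarrow> m2times {u} X)"
proof -
  have "e \<in> m2times {b} (m2times {c} X) \<longleftrightarrow> (\<exists>s\<in>X. \<exists>u. m2mult b c = Some u \<and> m2mult u s = Some e)"
    for e
    unfolding m2times_singleton using m2mult_assoc[of c _ b e] by blast
  then show ?thesis unfolding m2times_singleton by (auto split: option.split)
qed

lemma m2times_singleton_homogeneous:
  "X \<subseteq> {t. m2deg t = d} \<Longrightarrow> m2times {b} X \<subseteq> {t. m2deg t = dshift d (m2deg b)}"
  unfolding m2times_singleton by (auto dest!: m2deg_m2mult simp: dshift_def)

lemma m2times_singleton_RT00: "m2times {RT 0 0} X = X"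
  unfolding m2times_singleton using m2mult_RT00 by simp

lemma bigraded_M2_module_M2reg: "bigraded_M2_module M2reg"
  unfolding bigraded_M2_module_def M2reg_def
  by (simp only: bgmod.simps m2times_singleton_m2plus m2times_singleton_assoc m2times_singleton_RT00)
    (auto simp: m2plus_def dest: m2times_singleton_homogeneous split: option.split)

lemma bigraded_M2_module_f2_space:
  "bigraded_M2_module M \<Longrightarrow> f2_space (bcar M d) (badd M d) (bzero M d)"
  unfolding bigraded_M2_module_def by unfold_locales blast+

lemma bigraded_M2_moduleD:
  assumes "bigraded_M2_module M" and "x \<in> bcar M d"
  shows bact_closed: "bact M b d x \<in> bcar M (dshift d (m2deg b))"
    and bact_badd: "y \<in> bcar M d \<Longrightarrow>
      bact M b d (badd M d x y) = badd M (dshift d (m2deg b)) (bact M b d x) (bact M b d y)"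
    and bact_bact: "bact M b (dshift d (m2deg c)) (bact M c d x) =
      (case m2mult b c of
         None \<Rightarrow> bzero M (dshift (dshift d (m2deg c)) (m2deg b))
       | Some e \<Rightarrow> bact M e d x)"
  using assms unfolding bigraded_M2_module_def by blast+

lemma bg_homD:
  assumes "bg_hom M N f" and "x \<in> bcar M d"
  shows bg_hom_closed: "f d x \<in> bcar N d"
    and bg_hom_badd: "y \<in> bcar M d \<Longrightarrow> f d (badd M d x y) = badd N d (f d x) (f d y)"
    and bg_hom_bact: "f (dshift d (m2deg b)) (bact M b d x) = bact N b d (f d x)"
  using assms unfolding bg_hom_def by blast+

definition hom_of_functional :: "'a bgmod \<Rightarrow> ('a \<Rightarrow> bool) \<Rightarrow> int \<times> int \<Rightarrow> 'a \<Rightarrow> m2b set" where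
  "hom_of_functional B \<Lambda> d y = {b. m2deg b = d \<and> \<Lambda> (bact B (dual b) d y)}"

lemma hom_of_functional_bact:
  assumes B: "bigraded_M2_module B"
    and \<Lambda>: "linear_functional_on (bcar B (0, -2)) (badd B (0, -2)) \<Lambda>"
    and x: "x \<in> bcar B d"
  shows "hom_of_functional B \<Lambda> (dshift d (m2deg c)) (bact B c d x)
    = m2times {c} (hom_of_functional B \<Lambda> d x)"
proof -
  have zero: "\<not> \<Lambda> (bzero B (0, -2))"
    using f2_space.linear_functional_zero[OF bigraded_M2_module_f2_space[OF B] \<Lambda>] .
  have "e \<in> hom_of_functional B \<Lambda> (dshift d (m2deg c)) (bact B c d x) \<longleftrightarrow>
    (\<exists>t. m2deg t = d \<and> \<Lambda> (bact B (dual t) d x) \<and> m2mult c t = Some e)"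
    if e: "m2deg e = dshift d (m2deg c)" for e
  proof -
    have act: "bact B (dual e) (dshift d (m2deg c)) (bact B c d x) =
      (case m2mult (dual e) c of None \<Rightarrow> bzero B (0, -2) | Some u \<Rightarrow> bact B u d x)"
      using bact_bact[OF B x, of "dual e" c] e dshift_m2deg_dual[of e] by (simp split: option.split)
    show ?thesis
    proof (cases "m2mult (dual e) c")
      case None
      then have "m2mult c t \<noteq> Some e" for t
        using m2mult_dual_eq_Some_iff[of e c "dual t"] by auto
      then show ?thesis
        using act zero None unfolding hom_of_functional_def by auto
    next
      case (Some u)
      then have u: "m2mult c (dual u) = Some e" using m2mult_dual_eq_Some_iff by blast
      have "(\<exists>t. m2deg t = d \<and> \<Lambda> (bact B (dual t) d x) \<and> m2mult c t = Some e)
        \<longleftrightarrow> \<Lambda> (bact B u d x)"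
      proof -
        have "m2mult c t = Some e \<longleftrightarrow> t = dual u" for t
          using m2mult_inj[OF u] u by blast
        then show ?thesis using m2deg_m2mult_right[OF u e] by simp
      qed
      then show ?thesis
        using act Some e unfolding hom_of_functional_def by simp
    qed
  qed
  moreover have "m2deg e = dshift d (m2deg c)" if "m2mult c t = Some e" "m2deg t = d" for e t
    using m2deg_m2mult[OF that(1)] that(2) by (simp add: dshift_def add.commute)
  ultimately show ?thesis
    unfolding m2times_singleton by (auto simp: hom_of_functional_def)
qed

lemma bg_hom_hom_of_functional:
  assumes B: "bigraded_M2_module B"
    and \<Lambda>: "linear_functional_on (bcar B (0, -2)) (badd B (0, -2)) \<Lambda>"
  shows "bg_hom B M2reg (hom_of_functional B \<Lambda>)"
  unfolding bg_hom_def
proof (intro allI conjI ballI)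
  fix d x assume x: "x \<in> bcar B d"
  show "hom_of_functional B \<Lambda> d x \<in> bcar M2reg d"
    by (auto simp: hom_of_functional_def M2reg_def)
  show "hom_of_functional B \<Lambda> (dshift d (m2deg c)) (bact B c d x) = bact M2reg c d (hom_of_functional B \<Lambda> d x)"
    for c
    using hom_of_functional_bact[OF B \<Lambda> x] by (simp add: M2reg_def)
  fix y assume y: "y \<in> bcar B d"
  have "b \<in> hom_of_functional B \<Lambda> d (badd B d x y) \<longleftrightarrow>
    b \<in> m2plus (hom_of_functional B \<Lambda> d x) (hom_of_functional B \<Lambda> d y)" for b
  proof (cases "m2deg b = d")
    case True
    then have "dshift d (m2deg (dual b)) = (0, -2)" using dshift_m2deg_dual by blast
    then show ?thesis
      using \<Lambda> bact_badd[OF B x y, of "dual b"] bact_closed[OF B, of _ d "dual b"] x y True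
      unfolding hom_of_functional_def m2plus_def linear_functional_on_def by auto
  qed (auto simp: hom_of_functional_def m2plus_def)
  then show "hom_of_functional B \<Lambda> d (badd B d x y) =
    badd M2reg d (hom_of_functional B \<Lambda> d x) (hom_of_functional B \<Lambda> d y)"
    by (auto simp: M2reg_def)
qed

lemma hom_of_functional_theta:
  assumes A: "bigraded_M2_module A" and f: "bg_hom A M2reg f" and x: "x \<in> bcar A d"
  shows "hom_of_functional A (\<lambda>a. Th 0 0 \<in> f (0, -2) a) d x = f d x"
proof -
  have "b \<in> hom_of_functional A (\<lambda>a. Th 0 0 \<in> f (0, -2) a) d x \<longleftrightarrow> b \<in> f d x" for b
  proof (cases "m2deg b = d")
    case True
    then have "f (0, -2) (bact A (dual b) d x) = m2times {dual b} (f d x)"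
      using bg_hom_bact[OF f x, of "dual b"] dshift_m2deg_dual[of b] by (simp add: M2reg_def)
    then show ?thesis
      using True m2mult_dual_eq_theta_iff unfolding hom_of_functional_def m2times_singleton by auto
  next
    case False
    then show ?thesis
      using bg_hom_closed[OF f x] unfolding hom_of_functional_def by (auto simp: M2reg_def)
  qed
  then show ?thesis by blast
qed

lemma hom_of_functional_comp:
  assumes i: "bg_hom A B i" and x: "x \<in> bcar A d" and A: "bigraded_M2_module A"
    and \<Lambda>: "\<forall>a\<in>bcar A (0, -2). \<Lambda> (i (0, -2) a) = \<mu> a"
  shows "hom_of_functional B \<Lambda> d (i d x) = hom_of_functional A \<mu> d x"
proof -
  have "\<Lambda> (bact B (dual b) d (i d x)) = \<mu> (bact A (dual b) d x)" if "m2deg b = d" for b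
  proof -
    have "dshift d (m2deg (dual b)) = (0, -2)" using that dshift_m2deg_dual by blast
    then show ?thesis
      using bg_hom_bact[OF i x, of "dual b", symmetric] bact_closed[OF A x, of "dual b"] \<Lambda> by simp
  qed
  then show ?thesis unfolding hom_of_functional_def by blast
qed

lemma bg_injective_M2reg: "bg_injective M2reg TYPE('a) TYPE('b)"
  unfolding bg_injective_def
proof (intro allI impI)
  fix A :: "'a bgmod" and B :: "'b bgmod" and i f
  assume A: "bigraded_M2_module A" and B: "bigraded_M2_module B"
    and i: "bg_mono A B i" and f: "bg_hom A M2reg f"
  let ?\<theta> = "(0, -2) :: int \<times> int"
  define \<mu> where "\<mu> a \<longleftrightarrow> Th 0 0 \<in> f ?\<theta> a" for a
  have i_hom: "bg_hom A B i" and i_inj: "inj_on (i ?\<theta>) (bcar A ?\<theta>)"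
    using i unfolding bg_mono_def by auto
  have "linear_functional_on (bcar A ?\<theta>) (badd A ?\<theta>) \<mu>"
    using bg_hom_badd[OF f] by (auto simp: linear_functional_on_def \<mu>_def M2reg_def m2plus_def)
  then obtain \<Lambda> where \<Lambda>: "linear_functional_on (bcar B ?\<theta>) (badd B ?\<theta>) \<Lambda>"
    and extends: "\<forall>a\<in>bcar A ?\<theta>. \<Lambda> (i ?\<theta> a) = \<mu> a"
    using f2_space.linear_functional_extension[OF bigraded_M2_module_f2_space[OF B]
        bigraded_M2_module_f2_space[OF A]] bg_hom_closed[OF i_hom] bg_hom_badd[OF i_hom] i_inj
    by blast
  show "\<exists>g. bg_hom B M2reg g \<and> (\<forall>d. \<forall>x\<in>bcar A d. g d (i d x) = f d x)"
  proof (intro exI conjI allI ballI)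
    show "bg_hom B M2reg (hom_of_functional B \<Lambda>)"
      using B \<Lambda> by (rule bg_hom_hom_of_functional)
    show "hom_of_functional B \<Lambda> d (i d x) = f d x" if "x \<in> bcar A d" for d x
      using hom_of_functional_comp[OF i_hom that A extends] hom_of_functional_theta[OF A f that]
      unfolding \<mu>_def by simp
  qed
qed

theorem proposition4p2:
  shows "bigraded_M2_module M2reg \<and> bg_injective M2reg TYPE('a) TYPE('b)"
  using bigraded_M2_module_M2reg bg_injective_M2reg by blast

end
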